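(* In $G=GL(\infty,F_2)\ltimes F_2^\infty$, for every nonzero $v\in F_2^\infty$ one has $\mathrm{fpc}(v)=\{e,v\}$.
   Context: For a group $G$ and $g\in G$, $C_G(g)$ is the centralizer of $g$ and $\mathrm{fpc}(g)=\{h\in G:\ \{t^{-1}ht: t\in C_G(g)\}\text{ is finite}\}$. $F_2$ is the field with two elements and $F_2^\infty=\bigoplus_{\mathbb N}F_2$ is the space of finitely supported column vectors, regarded as an abelian group under addition. $GL(\infty,F_2)$ is the group of invertible $\mathbb N\times\mathbb N$ matrices $M$ over $F_2$ with $M_{ij}\neq\delta_{ij}$ for only finitely many $(i,j)$, acting on $F_2^\infty$ by matrix multiplication. $G=GL(\infty,F_2)\ltimes F_2^\infty$ is the semidirect product with $gvg^{-1}=g(v)$. *)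

theory Defs
  imports "HOL-Algebra.Group" "HOL-Library.Z2"
begin

text \<open>F_2 is the field bit from HOL-Library.Z2.  Vectors of F_2^infinity are
  finitely supported functions nat => bit; matrices are nat => nat => bit.\<close>

type_synonym vec2 = "nat \<Rightarrow> bit"
type_synonym mat2 = "nat \<Rightarrow> nat \<Rightarrow> bit"

definition Vfin :: "vec2 set" where
  "Vfin = {v. finite {i. v i \<noteq> 0}}"

definition id_mat :: mat2 where
  "id_mat i j = (if i = j then 1 else 0)"

text \<open>Matrix products; the sums are finite for the matrices/vectors considered
  (finitely many entries differing from the identity, resp. finite support).\<close>
definition mat_mult :: "mat2 \<Rightarrow> mat2 \<Rightarrow> mat2" where
  "mat_mult M N i j = (\<Sum>k\<in>{k. M i k \<noteq> 0}. M i k * N k j)"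

definition mat_vec :: "mat2 \<Rightarrow> vec2 \<Rightarrow> vec2" where
  "mat_vec M v i = (\<Sum>k\<in>{k. v k \<noteq> 0}. M i k * v k)"

definition finitary :: "mat2 \<Rightarrow> bool" where
  "finitary M \<longleftrightarrow> finite {(i, j). M i j \<noteq> id_mat i j}"

definition GLinf :: "mat2 set" where
  "GLinf = {M. finitary M \<and> (\<exists>N. finitary N \<and> mat_mult M N = id_mat \<and> mat_mult N M = id_mat)}"

text \<open>The pair (g, v)
  stands for the group element v g (v in the normal subgroup, g in GL), so that
  (g, v)(h, w) = v g w h = (v + g(w)) (g h) since g w g^{-1} = g(w).\<close>
definition SD :: "(mat2 \<times> vec2) monoid" where
  "SD = \<lparr>carrier = GLinf \<times> Vfin,
         mult = (\<lambda>(g, v) (h, w). (mat_mult g h, (\<lambda>i. v i + mat_vec g w i))),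
         one = (id_mat, (\<lambda>i. 0))\<rparr>"

definition vec_elt :: "vec2 \<Rightarrow> mat2 \<times> vec2" where
  "vec_elt v = (id_mat, v)"

definition centralizer_of :: "('a, 'b) monoid_scheme \<Rightarrow> 'a \<Rightarrow> 'a set" where
  "centralizer_of G g = {t \<in> carrier G. t \<otimes>\<^bsub>G\<^esub> g = g \<otimes>\<^bsub>G\<^esub> t}"

definition fpc :: "('a, 'b) monoid_scheme \<Rightarrow> 'a \<Rightarrow> 'a set" where
  "fpc G g = {h \<in> carrier G.
     finite ((\<lambda>t. inv\<^bsub>G\<^esub> t \<otimes>\<^bsub>G\<^esub> h \<otimes>\<^bsub>G\<^esub> t) ` centralizer_of G g)}"

end

(* 1 and v lie in fpc(v) in every group. For any other h = (a, u) we find infinitely many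
   distinct conjugates of h by elements of the centralizer of v, namely by involutions (t, 0)
   where t = transvection k S is the map x \<mapsto> x + (\<Sum>s\<in>S. x s) e_k with k \<notin> S and
   \<Sum>s\<in>S. v s = 0; k ranges over all indices beyond the supports of a, v and S.
   If a \<noteq> 1, pick a i j \<noteq> \<delta> i j and take t = transvection j {k}: in row i, the matrix t a t
   restricted to large columns is the unit vector e_k.
   If a = 1, then u \<notin> {0, v}, so over F_2 some finite S has \<Sum>s\<in>S. u s = 1 and
   \<Sum>s\<in>S. v s = 0, and t = transvection k S conjugates the translation u to u + e_k. *)

theory Submission
  imports Defs "HOL-Library.Infinite_Set"
begin

declare add_bit_eq_xor[simp del] mult_bit_eq_and[simp del] sum.lessThan_Suc[simp del]

definition mat_bounded :: "nat \<Rightarrow> mat2 \<Rightarrow> bool" where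
  "mat_bounded n M \<longleftrightarrow> (\<forall>i j. n \<le> i \<or> n \<le> j \<longrightarrow> M i j = id_mat i j)"

definition vec_bounded :: "nat \<Rightarrow> vec2 \<Rightarrow> bool" where
  "vec_bounded n v \<longleftrightarrow> (\<forall>i\<ge>n. v i = 0)"

lemma mat_bounded_mono: "mat_bounded n M \<Longrightarrow> n \<le> m \<Longrightarrow> mat_bounded m M"
  unfolding mat_bounded_def by auto

lemma vec_bounded_mono: "vec_bounded n v \<Longrightarrow> n \<le> m \<Longrightarrow> vec_bounded m v"
  unfolding vec_bounded_def by auto

lemma mat_bounded_imp_finitary:
  assumes "mat_bounded n M"
  shows "finitary M"
proof -
  from assms have "{(i, j). M i j \<noteq> id_mat i j} \<subseteq> {..<n} \<times> {..<n}"
    unfolding mat_bounded_def by (auto simp: not_less[symmetric])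
  then show "finitary M"
    unfolding finitary_def by (rule finite_subset) auto
qed

lemma finitary_iff_eventually_bounded:
  "finitary M \<longleftrightarrow> (\<forall>\<^sub>F n in sequentially. mat_bounded n M)"
proof
  let ?D = "{(i, j). M i j \<noteq> id_mat i j}"
  assume "finitary M"
  then have "finite (fst ` ?D \<union> snd ` ?D)"
    by (simp add: finitary_def)
  then obtain n where n: "fst ` ?D \<union> snd ` ?D \<subseteq> {..<n}"
    using finite_nat_bounded by blast
  have "mat_bounded n M"
    unfolding mat_bounded_def using n by (force simp: image_iff)
  then show "\<forall>\<^sub>F n in sequentially. mat_bounded n M"
    by (auto intro: eventually_sequentiallyI mat_bounded_mono)
next
  assume "\<forall>\<^sub>F n in sequentially. mat_bounded n M"
  then show "finitary M"
    using eventually_happens'[OF sequentially_bot] mat_bounded_imp_finitary by blast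
qed

lemma Vfin_iff_eventually_bounded:
  "v \<in> Vfin \<longleftrightarrow> (\<forall>\<^sub>F n in sequentially. vec_bounded n v)"
proof
  assume "v \<in> Vfin"
  then obtain n where "{i. v i \<noteq> 0} \<subseteq> {..<n}"
    unfolding Vfin_def using finite_nat_bounded by blast
  then have "vec_bounded n v"
    unfolding vec_bounded_def by (auto simp: subset_iff not_less[symmetric])
  then show "\<forall>\<^sub>F n in sequentially. vec_bounded n v"
    by (auto intro: eventually_sequentiallyI vec_bounded_mono)
next
  assume "\<forall>\<^sub>F n in sequentially. vec_bounded n v"
  then obtain n where "vec_bounded n v"
    using eventually_happens'[OF sequentially_bot] by blast
  then have "{i. v i \<noteq> 0} \<subseteq> {..<n}"
    unfolding vec_bounded_def by (auto simp: not_less[symmetric])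
  then show "v \<in> Vfin"
    unfolding Vfin_def using finite_subset by blast
qed

lemma eventually_subset_lessThan:
  assumes "finite (S::nat set)"
  shows "\<forall>\<^sub>F n in sequentially. S \<subseteq> {..<n}"
proof -
  obtain n0 where "S \<subseteq> {..<n0}"
    using finite_nat_bounded[OF assms] by blast
  then show ?thesis
    by (auto intro!: eventually_sequentiallyI[of n0])
qed

lemma mat_mult_eq_sum_lessThan:
  assumes "mat_bounded n M" "n \<le> B" "p < B"
  shows "mat_mult M N p q = (\<Sum>l<B. M p l * N l q)"
proof -
  have "M p l = 0" if "B \<le> l" for l
    using assms that unfolding mat_bounded_def id_mat_def by auto
  then have "{l. M p l \<noteq> 0} \<subseteq> {..<B}"
    using not_le by blast
  then show ?thesis
    unfolding mat_mult_def by (intro sum.mono_neutral_left) auto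
qed

lemma mat_vec_eq_sum_lessThan:
  assumes "vec_bounded n v" "n \<le> B"
  shows "mat_vec M v p = (\<Sum>l<B. M p l * v l)"
proof -
  have "v l = 0" if "B \<le> l" for l
    using assms that unfolding vec_bounded_def by auto
  then have "{l. v l \<noteq> 0} \<subseteq> {..<B}"
    using not_le by blast
  then show ?thesis
    unfolding mat_vec_def by (intro sum.mono_neutral_left) auto
qed

lemma sum_id_mat_mult: "p < B \<Longrightarrow> (\<Sum>l<B. id_mat p l * f l) = f p"
  by (simp add: id_mat_def if_distrib[of "\<lambda>x. x * _"] cong: if_cong)

lemma sum_mult_id_mat: "q < B \<Longrightarrow> (\<Sum>l<B. f l * id_mat l q) = f q"
  by (simp add: id_mat_def if_distrib[of "\<lambda>x. _ * x"] cong: if_cong)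

lemma mat_bounded_id_mat: "mat_bounded 0 id_mat"
  by (simp add: mat_bounded_def)

lemma mat_mult_id_left [simp]: "mat_mult id_mat N = N"
proof (intro ext)
  fix p q
  show "mat_mult id_mat N p q = N p q"
    using mat_mult_eq_sum_lessThan[OF mat_bounded_id_mat, of "Suc p"]
    by (simp add: sum_id_mat_mult)
qed

lemma mat_mult_id_right:
  assumes "finitary M"
  shows "mat_mult M id_mat = M"
proof (intro ext)
  fix p q
  have "\<forall>\<^sub>F n in sequentially. mat_bounded n M \<and> p < n \<and> q < n"
    using assms eventually_gt_at_top by (simp add: finitary_iff_eventually_bounded eventually_conj_iff)
  then obtain n where "mat_bounded n M" "p < n" "q < n"
    using eventually_happens'[OF sequentially_bot] by blast
  then show "mat_mult M id_mat p q = M p q"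
    by (simp add: mat_mult_eq_sum_lessThan[OF _ order.refl] sum_mult_id_mat)
qed

lemma mat_vec_id:
  assumes "v \<in> Vfin"
  shows "mat_vec id_mat v = v"
proof
  fix p
  have "\<forall>\<^sub>F n in sequentially. vec_bounded n v \<and> p < n"
    using assms eventually_gt_at_top by (simp add: Vfin_iff_eventually_bounded eventually_conj_iff)
  then obtain n where "vec_bounded n v" "p < n"
    using eventually_happens'[OF sequentially_bot] by blast
  then show "mat_vec id_mat v p = v p"
    by (simp add: mat_vec_eq_sum_lessThan[OF _ order.refl] sum_id_mat_mult)
qed

lemma mat_vec_zero [simp]: "mat_vec M (\<lambda>i. 0) = (\<lambda>i. 0)"
  by (rule ext) (simp add: mat_vec_def)

lemma mat_bounded_mat_mult:
  assumes M: "mat_bounded n M" and N: "mat_bounded n N"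
  shows "mat_bounded n (mat_mult M N)"
  unfolding mat_bounded_def
proof (intro allI impI)
  fix i j assume ij: "n \<le> i \<or> n \<le> j"
  let ?B = "Suc (max n (max i j))"
  have prod: "mat_mult M N i j = (\<Sum>l<?B. M i l * N l j)"
    by (rule mat_mult_eq_sum_lessThan[OF M]) auto
  show "mat_mult M N i j = id_mat i j"
  proof (cases "n \<le> i")
    case True
    then have "M i l = id_mat i l" for l
      using M by (simp add: mat_bounded_def)
    then show ?thesis
      using prod N True by (simp add: sum_id_mat_mult mat_bounded_def)
  next
    case False
    then have "N l j = id_mat l j" for l
      using N ij by (simp add: mat_bounded_def)
    then show ?thesis
      using prod M ij False by (simp add: sum_mult_id_mat mat_bounded_def)
  qed
qed

lemma vec_bounded_mat_vec:
  assumes M: "mat_bounded n M" and v: "vec_bounded n v"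
  shows "vec_bounded n (mat_vec M v)"
  unfolding vec_bounded_def
proof (intro allI impI)
  fix i assume "n \<le> i"
  then have "M i l = id_mat i l" for l
    using M by (simp add: mat_bounded_def)
  moreover have "mat_vec M v i = (\<Sum>l<Suc (max n i). M i l * v l)"
    by (rule mat_vec_eq_sum_lessThan[OF v]) simp
  ultimately show "mat_vec M v i = 0"
    using v \<open>n \<le> i\<close> by (simp add: sum_id_mat_mult vec_bounded_def)
qed

lemma finitary_mat_mult:
  assumes "finitary M" "finitary N"
  shows "finitary (mat_mult M N)"
  using eventually_elim2[OF assms[unfolded finitary_iff_eventually_bounded]] mat_bounded_mat_mult
  by (simp add: finitary_iff_eventually_bounded)

lemma Vfin_mat_vec:
  assumes "finitary M" "v \<in> Vfin"
  shows "mat_vec M v \<in> Vfin"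
  using eventually_elim2[OF assms[unfolded finitary_iff_eventually_bounded Vfin_iff_eventually_bounded]]
    vec_bounded_mat_vec
  by (simp add: Vfin_iff_eventually_bounded)

lemma Vfin_add:
  assumes "v \<in> Vfin" "w \<in> Vfin"
  shows "(\<lambda>i. v i + w i) \<in> Vfin"
proof -
  have "{i. v i + w i \<noteq> 0} \<subseteq> {i. v i \<noteq> 0} \<union> {i. w i \<noteq> 0}"
    by auto
  then show ?thesis
    using assms unfolding Vfin_def by (auto intro: finite_subset)
qed

lemma mat_mult_assoc:
  assumes "finitary M" "finitary N" "finitary P"
  shows "mat_mult (mat_mult M N) P = mat_mult M (mat_mult N P)"
proof (intro ext)
  fix p q
  have "\<forall>\<^sub>F n in sequentially. mat_bounded n M \<and> mat_bounded n N \<and> p < n"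
    using assms eventually_gt_at_top by (simp add: finitary_iff_eventually_bounded eventually_conj_iff)
  then obtain n where M: "mat_bounded n M" and N: "mat_bounded n N" and "p < n"
    using eventually_happens'[OF sequentially_bot] by blast
  note sum_n = mat_mult_eq_sum_lessThan[OF _ order.refl]
  have "mat_mult (mat_mult M N) P p q = (\<Sum>l<n. mat_mult M N p l * P l q)"
    using mat_bounded_mat_mult[OF M N] \<open>p < n\<close> by (rule sum_n)
  also have "\<dots> = (\<Sum>l<n. (\<Sum>k<n. M p k * N k l) * P l q)"
    using M \<open>p < n\<close> by (simp add: sum_n)
  also have "\<dots> = (\<Sum>k<n. M p k * (\<Sum>l<n. N k l * P l q))"
    unfolding sum_distrib_left sum_distrib_right mult.assoc by (rule sum.swap)
  also have "\<dots> = mat_mult M (mat_mult N P) p q"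
    using M N \<open>p < n\<close> by (simp add: sum_n)
  finally show "mat_mult (mat_mult M N) P p q = mat_mult M (mat_mult N P) p q" .
qed

lemma mat_vec_mat_mult:
  assumes "finitary M" "finitary N" "v \<in> Vfin"
  shows "mat_vec (mat_mult M N) v = mat_vec M (mat_vec N v)"
proof
  fix p
  have "\<forall>\<^sub>F n in sequentially. mat_bounded n M \<and> mat_bounded n N \<and> vec_bounded n v \<and> p < n"
    using assms eventually_gt_at_top
    by (simp add: finitary_iff_eventually_bounded Vfin_iff_eventually_bounded eventually_conj_iff)
  then obtain n where M: "mat_bounded n M" and N: "mat_bounded n N" and v: "vec_bounded n v"
    and "p < n"
    using eventually_happens'[OF sequentially_bot] by blast
  note mm_n = mat_mult_eq_sum_lessThan[OF _ order.refl] and mv_n = mat_vec_eq_sum_lessThan[OF _ order.refl]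
  have "mat_vec (mat_mult M N) v p = (\<Sum>l<n. (\<Sum>k<n. M p k * N k l) * v l)"
    using M v \<open>p < n\<close> by (simp add: mm_n mv_n)
  also have "\<dots> = (\<Sum>k<n. M p k * (\<Sum>l<n. N k l * v l))"
    unfolding sum_distrib_left sum_distrib_right mult.assoc by (rule sum.swap)
  also have "\<dots> = mat_vec M (mat_vec N v) p"
    using vec_bounded_mat_vec[OF N v] v by (simp add: mv_n)
  finally show "mat_vec (mat_mult M N) v p = mat_vec M (mat_vec N v) p" .
qed

lemma mat_vec_add:
  assumes "v \<in> Vfin" "w \<in> Vfin"
  shows "mat_vec M (\<lambda>i. v i + w i) = (\<lambda>i. mat_vec M v i + mat_vec M w i)"
proof
  fix p
  have "\<forall>\<^sub>F n in sequentially. vec_bounded n v \<and> vec_bounded n w"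
    using assms by (simp add: Vfin_iff_eventually_bounded eventually_conj_iff)
  then obtain n where v: "vec_bounded n v" and w: "vec_bounded n w"
    using eventually_happens'[OF sequentially_bot] by blast
  then have "vec_bounded n (\<lambda>i. v i + w i)"
    by (simp add: vec_bounded_def)
  then show "mat_vec M (\<lambda>i. v i + w i) p = mat_vec M v p + mat_vec M w p"
    using v w by (simp add: mat_vec_eq_sum_lessThan[OF _ order.refl] distrib_left sum.distrib)
qed

lemma GLinf_finitary: "g \<in> GLinf \<Longrightarrow> finitary g"
  by (simp add: GLinf_def)

lemma id_mat_GLinf: "id_mat \<in> GLinf"
  unfolding GLinf_def using mat_bounded_imp_finitary[OF mat_bounded_id_mat] by auto

lemma mat_mult_GLinf:
  assumes "g \<in> GLinf" "h \<in> GLinf"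
  shows "mat_mult g h \<in> GLinf"
proof -
  obtain g' where g: "finitary g" "finitary g'" "mat_mult g g' = id_mat" "mat_mult g' g = id_mat"
    using assms(1) by (auto simp: GLinf_def)
  obtain h' where h: "finitary h" "finitary h'" "mat_mult h h' = id_mat" "mat_mult h' h = id_mat"
    using assms(2) by (auto simp: GLinf_def)
  have "mat_mult (mat_mult g h) (mat_mult h' g') = id_mat"
    using g h by (simp add: mat_mult_assoc finitary_mat_mult flip: mat_mult_assoc[of h h' g'])
  moreover have "mat_mult (mat_mult h' g') (mat_mult g h) = id_mat"
    using g h by (simp add: mat_mult_assoc finitary_mat_mult flip: mat_mult_assoc[of g' g h])
  ultimately show ?thesis
    unfolding GLinf_def using g h finitary_mat_mult by blast
qed

lemma carrier_SD: "(g, v) \<in> carrier SD \<longleftrightarrow> g \<in> GLinf \<and> v \<in> Vfin"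
  by (simp add: SD_def)

lemma mult_SD: "(g, v) \<otimes>\<^bsub>SD\<^esub> (h, w) = (mat_mult g h, \<lambda>i. v i + mat_vec g w i)"
  by (simp add: SD_def)

lemma one_SD: "\<one>\<^bsub>SD\<^esub> = (id_mat, \<lambda>i. 0)"
  by (simp add: SD_def)

lemma group_SD: "group SD"
proof (rule groupI)
  fix x y assume "x \<in> carrier SD" "y \<in> carrier SD"
  then show "x \<otimes>\<^bsub>SD\<^esub> y \<in> carrier SD"
    by (cases x, cases y)
      (simp add: carrier_SD mult_SD mat_mult_GLinf Vfin_add Vfin_mat_vec GLinf_finitary)
next
  show "\<one>\<^bsub>SD\<^esub> \<in> carrier SD"
    by (simp add: one_SD carrier_SD id_mat_GLinf Vfin_def)
next
  fix x y z assume "x \<in> carrier SD" "y \<in> carrier SD" "z \<in> carrier SD"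
  then show "x \<otimes>\<^bsub>SD\<^esub> y \<otimes>\<^bsub>SD\<^esub> z = x \<otimes>\<^bsub>SD\<^esub> (y \<otimes>\<^bsub>SD\<^esub> z)"
    by (cases x, cases y, cases z)
      (simp add: carrier_SD mult_SD GLinf_finitary mat_mult_assoc mat_vec_mat_mult mat_vec_add
        Vfin_mat_vec add.assoc)
next
  fix x assume "x \<in> carrier SD"
  then show "\<one>\<^bsub>SD\<^esub> \<otimes>\<^bsub>SD\<^esub> x = x"
    by (cases x) (simp add: carrier_SD one_SD mult_SD mat_vec_id)
next
  fix x assume x: "x \<in> carrier SD"
  obtain g v where gv: "x = (g, v)"
    by fastforce
  obtain g' where g': "finitary g" "finitary g'" "mat_mult g g' = id_mat" "mat_mult g' g = id_mat"
    using x gv by (auto simp: carrier_SD GLinf_def)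
  have "(g', mat_vec g' v) \<in> carrier SD"
    using x gv g' by (auto simp: carrier_SD GLinf_def Vfin_mat_vec)
  moreover have "(g', mat_vec g' v) \<otimes>\<^bsub>SD\<^esub> x = \<one>\<^bsub>SD\<^esub>"
    using gv g' by (simp add: mult_SD one_SD)
  ultimately show "\<exists>y\<in>carrier SD. y \<otimes>\<^bsub>SD\<^esub> x = \<one>\<^bsub>SD\<^esub>"
    by blast
qed

lemma (in group) one_in_fpc: "\<one> \<in> fpc G g"
proof -
  have "(\<lambda>t. inv t \<otimes> \<one> \<otimes> t) ` centralizer_of G g \<subseteq> {\<one>}"
    by (auto simp: centralizer_of_def)
  then show ?thesis
    unfolding fpc_def using finite_subset by auto
qed

lemma (in group) self_in_fpc:
  assumes "g \<in> carrier G"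
  shows "g \<in> fpc G g"
proof -
  have "inv t \<otimes> g \<otimes> t = g" if "t \<in> carrier G" "t \<otimes> g = g \<otimes> t" for t
    using that assms by (metis inv_closed l_inv l_one m_assoc)
  then have "(\<lambda>t. inv t \<otimes> g \<otimes> t) ` centralizer_of G g \<subseteq> {g}"
    by (auto simp: centralizer_of_def)
  then show ?thesis
    unfolding fpc_def using assms finite_subset by auto
qed

lemma infinitely_many_conjugates_not_in_fpc:
  assumes "\<And>k. k \<in> K \<Longrightarrow> T k \<in> centralizer_of G g" "infinite K"
    and "inj_on (\<lambda>k. inv\<^bsub>G\<^esub> T k \<otimes>\<^bsub>G\<^esub> h \<otimes>\<^bsub>G\<^esub> T k) K"
  shows "h \<notin> fpc G g"
proof
  assume "h \<in> fpc G g"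
  moreover have "(\<lambda>k. inv\<^bsub>G\<^esub> T k \<otimes>\<^bsub>G\<^esub> h \<otimes>\<^bsub>G\<^esub> T k) ` K
      \<subseteq> (\<lambda>t. inv\<^bsub>G\<^esub> t \<otimes>\<^bsub>G\<^esub> h \<otimes>\<^bsub>G\<^esub> t) ` centralizer_of G g"
    using assms(1) by blast
  ultimately have "finite ((\<lambda>k. inv\<^bsub>G\<^esub> T k \<otimes>\<^bsub>G\<^esub> h \<otimes>\<^bsub>G\<^esub> T k) ` K)"
    unfolding fpc_def using finite_subset by blast
  then show False
    using assms(2,3) finite_imageD by blast
qed

definition transvection :: "nat \<Rightarrow> nat set \<Rightarrow> mat2" where
  "transvection k S p q = id_mat p q + (if p = k \<and> q \<in> S then 1 else 0)"

lemma mat_bounded_transvection: "S \<subseteq> {..<n} \<Longrightarrow> k < n \<Longrightarrow> mat_bounded n (transvection k S)"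
  by (auto simp: mat_bounded_def transvection_def)

lemma finitary_transvection:
  assumes "finite S"
  shows "finitary (transvection k S)"
proof -
  have "{(i, j). transvection k S i j \<noteq> id_mat i j} = {k} \<times> S"
    by (auto simp: transvection_def)
  then show ?thesis
    using assms by (simp add: finitary_def)
qed

lemma sum_transvection_row:
  assumes "S \<subseteq> {..<n}" "p < n"
  shows "(\<Sum>l<n. transvection k S p l * f l) = f p + (if p = k then \<Sum>s\<in>S. f s else 0)"
proof -
  have "(\<Sum>l<n. transvection k S p l * f l)
      = (\<Sum>l<n. id_mat p l * f l) + (\<Sum>l<n. if p = k \<and> l \<in> S then f l else 0)"
    by (simp add: transvection_def distrib_right sum.distrib if_distrib[of "\<lambda>x. x * _"] cong: if_cong)
  also have "(\<Sum>l<n. if p = k \<and> l \<in> S then f l else 0) = (if p = k then \<Sum>s\<in>S. f s else 0)"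
    using assms(1) sum.inter_restrict[of "{..<n}" f S] by (simp add: Int_absorb1)
  finally show ?thesis
    using assms(2) by (simp add: sum_id_mat_mult)
qed

lemma sum_transvection_col:
  assumes "k < n" "q < n"
  shows "(\<Sum>l<n. f l * transvection k S l q) = f q + (if q \<in> S then f k else 0)"
  using assms
  by (simp add: transvection_def distrib_left sum.distrib sum_mult_id_mat
      if_distrib[of "\<lambda>x. _ * x"] cong: if_cong)

lemma mat_mult_transvection_left:
  assumes "finite S"
  shows "mat_mult (transvection k S) M p q = M p q + (if p = k then \<Sum>s\<in>S. M s q else 0)"
proof -
  have "\<forall>\<^sub>F n in sequentially. S \<subseteq> {..<n} \<and> k < n \<and> p < n"
    using eventually_subset_lessThan[OF assms] eventually_gt_at_top by (simp add: eventually_conj_iff)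
  then obtain n where "S \<subseteq> {..<n}" "k < n" "p < n"
    using eventually_happens'[OF sequentially_bot] by blast
  then show ?thesis
    by (simp add: mat_mult_eq_sum_lessThan[OF mat_bounded_transvection order.refl] sum_transvection_row)
qed

lemma mat_vec_transvection:
  assumes "finite S" "v \<in> Vfin"
  shows "mat_vec (transvection k S) v p = v p + (if p = k then \<Sum>s\<in>S. v s else 0)"
proof -
  have "\<forall>\<^sub>F n in sequentially. S \<subseteq> {..<n} \<and> vec_bounded n v \<and> p < n"
    using eventually_subset_lessThan[OF assms(1)] assms(2) eventually_gt_at_top
    by (simp add: Vfin_iff_eventually_bounded eventually_conj_iff)
  then obtain n where "S \<subseteq> {..<n}" "vec_bounded n v" "p < n"
    using eventually_happens'[OF sequentially_bot] by blast
  then show ?thesis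
    by (simp add: mat_vec_eq_sum_lessThan[OF _ order.refl] sum_transvection_row)
qed

lemma mat_mult_transvection_right:
  assumes "finitary M"
  shows "mat_mult M (transvection k S) p q = M p q + (if q \<in> S then M p k else 0)"
proof -
  have "\<forall>\<^sub>F n in sequentially. mat_bounded n M \<and> p < n \<and> q < n \<and> k < n"
    using assms eventually_gt_at_top by (simp add: finitary_iff_eventually_bounded eventually_conj_iff)
  then obtain n where "mat_bounded n M" "p < n" "q < n" "k < n"
    using eventually_happens'[OF sequentially_bot] by blast
  then show ?thesis
    by (simp add: mat_mult_eq_sum_lessThan[OF _ order.refl] sum_transvection_col)
qed

lemma transvection_square:
  assumes "finite S" "k \<notin> S"
  shows "mat_mult (transvection k S) (transvection k S) = id_mat"
proof (intro ext)
  fix p q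
  have "(\<Sum>s\<in>S. transvection k S s q) = (\<Sum>s\<in>S. if s = q then 1 else 0)"
    using assms(2) by (intro sum.cong) (auto simp: transvection_def id_mat_def)
  then show "mat_mult (transvection k S) (transvection k S) p q = id_mat p q"
    using assms by (simp add: mat_mult_transvection_left) (simp add: transvection_def)
qed

lemma transvection_GLinf: "finite S \<Longrightarrow> k \<notin> S \<Longrightarrow> transvection k S \<in> GLinf"
  unfolding GLinf_def using transvection_square finitary_transvection by blast

lemma transvection_in_centralizer:
  assumes "finite S" "k \<notin> S" "v \<in> Vfin" "(\<Sum>s\<in>S. v s) = 0"
  shows "(transvection k S, \<lambda>i. 0) \<in> centralizer_of SD (vec_elt v)"
proof -
  have "mat_vec (transvection k S) v = v"
    using assms by (intro ext) (simp add: mat_vec_transvection)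
  then show ?thesis
    using assms
    by (simp add: centralizer_of_def vec_elt_def carrier_SD mult_SD transvection_GLinf Vfin_def
        mat_mult_id_right finitary_transvection)
qed

lemma conj_transvection_SD:
  assumes "finite S" "k \<notin> S"
  defines "t \<equiv> (transvection k S, \<lambda>i. 0)"
  shows "inv\<^bsub>SD\<^esub> t \<otimes>\<^bsub>SD\<^esub> (a, u) \<otimes>\<^bsub>SD\<^esub> t
    = (mat_mult (mat_mult (transvection k S) a) (transvection k S), mat_vec (transvection k S) u)"
proof -
  have "t \<in> carrier SD" "t \<otimes>\<^bsub>SD\<^esub> t = \<one>\<^bsub>SD\<^esub>"
    using assms by (simp_all add: carrier_SD transvection_GLinf Vfin_def mult_SD one_SD transvection_square)
  then have "inv\<^bsub>SD\<^esub> t = t"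
    using group.inv_equality[OF group_SD] by blast
  then show ?thesis
    by (simp add: t_def mult_SD)
qed

lemma transvection_conj_entry:
  assumes a: "mat_bounded n a" and "a i j \<noteq> id_mat i j" and "i < n" "j < n" "n \<le> k" "n \<le> m"
  shows "mat_mult (mat_mult (transvection j {k}) a) (transvection j {k}) i m = (if m = k then 1 else 0)"
proof -
  have "finitary (mat_mult (transvection j {k}) a)"
    using a by (intro finitary_mat_mult finitary_transvection mat_bounded_imp_finitary) auto
  then have "mat_mult (mat_mult (transvection j {k}) a) (transvection j {k}) i m
      = (a i m + (if i = j then a k m else 0)) + (if m = k then a i j + (if i = j then a k j else 0) else 0)"
    by (simp add: mat_mult_transvection_right mat_mult_transvection_left)
  moreover have "a i m = 0" "a k m = id_mat k m" "a k j = 0"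
    using a assms(3-6) by (auto simp: mat_bounded_def id_mat_def)
  ultimately show ?thesis
    using assms(2) by (auto simp: id_mat_def)
qed

lemma nonidentity_linear_part_not_in_fpc:
  assumes "v \<in> Vfin" "a \<in> GLinf" "a \<noteq> id_mat"
  shows "(a, u) \<notin> fpc SD (vec_elt v)"
proof -
  obtain i j where ij: "a i j \<noteq> id_mat i j"
    using assms(3) by (meson ext)
  have "\<forall>\<^sub>F n in sequentially. mat_bounded n a \<and> vec_bounded n v \<and> i < n \<and> j < n"
    using assms(1) GLinf_finitary[OF assms(2)] eventually_gt_at_top
    by (simp add: finitary_iff_eventually_bounded Vfin_iff_eventually_bounded eventually_conj_iff)
  then obtain n where a: "mat_bounded n a" and v: "vec_bounded n v" and "i < n" "j < n"
    using eventually_happens'[OF sequentially_bot] by blast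
  let ?t = "\<lambda>k. (transvection j {k}, \<lambda>i. 0)"
  let ?conj = "\<lambda>k. inv\<^bsub>SD\<^esub> ?t k \<otimes>\<^bsub>SD\<^esub> (a, u) \<otimes>\<^bsub>SD\<^esub> ?t k"
  have conj: "fst (?conj k) i m = (if m = k then 1 else 0)" if "n \<le> k" "n \<le> m" for k m
    using that \<open>j < n\<close> conj_transvection_SD[of "{k}" j a u]
      transvection_conj_entry[OF a ij \<open>i < n\<close> \<open>j < n\<close> that] by simp
  show ?thesis
  proof (rule infinitely_many_conjugates_not_in_fpc[where K = "{n..}" and T = ?t])
    fix k assume "k \<in> {n..}"
    then show "?t k \<in> centralizer_of SD (vec_elt v)"
      using \<open>j < n\<close> v assms(1) by (intro transvection_in_centralizer) (auto simp: vec_bounded_def)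
  next
    show "infinite {n..}"
      by (rule infinite_Ici)
  next
    show "inj_on ?conj {n..}"
    proof (rule inj_onI)
      fix k k' assume "k \<in> {n..}" "k' \<in> {n..}" "?conj k = ?conj k'"
      then show "k = k'"
        using conj[of k k] conj[of k' k] by (auto split: if_splits)
    qed
  qed
qed

lemma translation_not_in_fpc:
  assumes "v \<in> Vfin" "u \<in> Vfin" "finite S" "(\<Sum>s\<in>S. u s) = 1" "(\<Sum>s\<in>S. v s) = 0"
  shows "(id_mat, u) \<notin> fpc SD (vec_elt v)"
proof -
  have "\<forall>\<^sub>F n in sequentially. S \<subseteq> {..<n} \<and> vec_bounded n u"
    using eventually_subset_lessThan[OF assms(3)] assms(2)
    by (simp add: Vfin_iff_eventually_bounded eventually_conj_iff)
  then obtain n where S: "S \<subseteq> {..<n}" and u: "vec_bounded n u"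
    using eventually_happens'[OF sequentially_bot] by blast
  have k_notin: "k \<notin> S" if "n \<le> k" for k
    using S that by auto
  let ?t = "\<lambda>k. (transvection k S, \<lambda>i. 0)"
  let ?conj = "\<lambda>k. inv\<^bsub>SD\<^esub> ?t k \<otimes>\<^bsub>SD\<^esub> (id_mat, u) \<otimes>\<^bsub>SD\<^esub> ?t k"
  have conj: "snd (?conj k) p = (if p = k then 1 else 0)" if "n \<le> k" "n \<le> p" for k p
    using that u conj_transvection_SD[OF assms(3) k_notin[OF that(1)], of id_mat u] assms(2,3,4)
    by (simp add: mat_vec_transvection vec_bounded_def)
  show ?thesis
  proof (rule infinitely_many_conjugates_not_in_fpc[where K = "{n..}" and T = ?t])
    fix k assume "k \<in> {n..}"
    then show "?t k \<in> centralizer_of SD (vec_elt v)"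
      using assms k_notin by (intro transvection_in_centralizer) auto
  next
    show "infinite {n..}"
      by (rule infinite_Ici)
  next
    show "inj_on ?conj {n..}"
    proof (rule inj_onI)
      fix k k' assume "k \<in> {n..}" "k' \<in> {n..}" "?conj k = ?conj k'"
      then show "k = k'"
        using conj[of k k] conj[of k' k] by (auto split: if_splits)
    qed
  qed
qed

lemma exists_separating_set:
  fixes u v :: vec2
  assumes "u \<noteq> (\<lambda>i. 0)" "u \<noteq> v"
  obtains S where "finite S" "(\<Sum>s\<in>S. u s) = 1" "(\<Sum>s\<in>S. v s) = 0"
proof -
  obtain j where j: "u j \<noteq> v j"
    using assms(2) by (meson ext)
  obtain i where i: "u i = 1"
    using assms(1) by (meson ext bit_not_zero_iff)
  show thesis
  proof (cases "u j = 1")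
    case True
    with j have "v j = 0"
      by simp
    with True show thesis
      by (intro that[of "{j}"]) simp_all
  next
    case False
    with j have "u j = 0" "v j = 1" "i \<noteq> j"
      using i by auto
    then show thesis
      using i by (cases "v i") (auto intro: that[of "{i}"] that[of "{i, j}"])
  qed
qed

lemma fpc_vec_elt_subset:
  assumes "v \<in> Vfin" "h \<in> fpc SD (vec_elt v)"
  shows "h \<in> {\<one>\<^bsub>SD\<^esub>, vec_elt v}"
proof (rule ccontr)
  obtain a u where h: "h = (a, u)" and a: "a \<in> GLinf" and u: "u \<in> Vfin"
    using assms(2) by (cases h) (auto simp: fpc_def carrier_SD)
  assume "h \<notin> {\<one>\<^bsub>SD\<^esub>, vec_elt v}"
  then consider "a \<noteq> id_mat" | "u \<noteq> (\<lambda>i. 0)" "u \<noteq> v" "a = id_mat"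
    by (auto simp: h one_SD vec_elt_def)
  then show False
  proof cases
    case 1
    then show False
      using nonidentity_linear_part_not_in_fpc[OF assms(1) a] assms(2) h by blast
  next
    case 2
    then obtain S where "finite S" "(\<Sum>s\<in>S. u s) = 1" "(\<Sum>s\<in>S. v s) = 0"
      by (blast elim: exists_separating_set)
    then show False
      using translation_not_in_fpc[OF assms(1) u] assms(2) h 2 by blast
  qed
qed

theorem lemma4p4:
  assumes "v \<in> Vfin" and "v \<noteq> (\<lambda>i. 0)"
  shows "fpc SD (vec_elt v) = {\<one>\<^bsub>SD\<^esub>, vec_elt v}"
proof -
  interpret SD: group SD
    by (rule group_SD)
  have "vec_elt v \<in> carrier SD"
    using assms(1) by (simp add: vec_elt_def carrier_SD id_mat_GLinf)
  then show ?thesis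
    using fpc_vec_elt_subset[OF assms(1)] SD.one_in_fpc SD.self_in_fpc by blast
qed

end
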